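(* Let $X$ be a Banach space, let $(P_n)\subset\mathcal L(X)$ be a uniformly bounded sequence of projections with $P_nP_m=0$ for $n\ne m$, let $X_n=P_nX$ with inclusion $J_n:X_n\to X$, and suppose there are $1\le p\le\infty$ and $C,D<\infty$ with $\|\sum_n x_n\|\le C(\sum_n\|x_n\|^p)^{1/p}$ whenever $x_n\in X_n$, $\sum_n\|x_n\|^p<\infty$, and $(\sum_n\|P_nx\|^p)^{1/p}\le D\|x\|$ for $x\in X$ (with the usual supremum/$c_0$ modifications for $p=\infty$). Let $S_n\in\mathcal K(X_n)$ satisfy $\mathrm{dist}(S_n,\mathcal A(X_n))=1$ and $\|S_n\|\le2$, put $U_n=J_nS_nP_n\in\mathcal K(X)$, and let $\psi:c_0\to\mathcal K(X)/\mathcal A(X)$ be the linear embedding $\psi((a_k))=\sum_{k=1}^\infty a_kU_k+\mathcal A(X)$. Then the closed subalgebra $\mathcal B$ of $\mathcal K(X)/\mathcal A(X)$ generated by $\psi(c_0)$ is commutative.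
   Context: $\mathcal L(X)$ denotes the bounded operators on $X$, $\mathcal K(X,Y)$ the compact operators, $\mathcal A(X,Y)$ the norm closure of the finite rank operators, and $\mathcal K(X)/\mathcal A(X)$ the quotient Banach algebra with quotient norm. Under the stated hypotheses the series $\sum_k a_kU_k$ converges in $\mathcal K(X)$ for $(a_k)\in c_0$ and $\psi$ is a linear isomorphic embedding. *)

theory Defs
  imports "HOL-Analysis.Analysis"
begin

text \<open>Operators on a linear subspace V of X, represented by functions on X
  (only their values on V matter).\<close>

definition bounded_op_on :: "'a::real_normed_vector set \<Rightarrow> ('a \<Rightarrow> 'a) \<Rightarrow> bool" where
  "bounded_op_on V T \<longleftrightarrow>
     (\<forall>x\<in>V. T x \<in> V) \<and>
     (\<forall>x\<in>V. \<forall>y\<in>V. T (x + y) = T x + T y) \<and>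
     (\<forall>c. \<forall>x\<in>V. T (c *\<^sub>R x) = c *\<^sub>R T x) \<and>
     (\<exists>K. \<forall>x\<in>V. norm (T x) \<le> K * norm x)"

definition opnorm_on :: "'a::real_normed_vector set \<Rightarrow> ('a \<Rightarrow> 'a) \<Rightarrow> real" where
  "opnorm_on V T = Sup ((\<lambda>x. norm (T x)) ` (V \<inter> cball 0 1))"

definition finite_rank_on :: "'a::real_normed_vector set \<Rightarrow> ('a \<Rightarrow> 'a) \<Rightarrow> bool" where
  "finite_rank_on V T \<longleftrightarrow> bounded_op_on V T \<and> (\<exists>B. finite B \<and> T ` V \<subseteq> span B)"

definition approx_on :: "'a::real_normed_vector set \<Rightarrow> ('a \<Rightarrow> 'a) \<Rightarrow> bool" where
  "approx_on V T \<longleftrightarrow> bounded_op_on V T \<and>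
     (\<forall>e>0. \<exists>F. finite_rank_on V F \<and> opnorm_on V (\<lambda>x. T x - F x) < e)"

definition compact_op_on :: "'a::real_normed_vector set \<Rightarrow> ('a \<Rightarrow> 'a) \<Rightarrow> bool" where
  "compact_op_on V T \<longleftrightarrow> bounded_op_on V T \<and> compact (closure (T ` (V \<inter> cball 0 1)))"

definition dist_approx_on :: "'a::real_normed_vector set \<Rightarrow> ('a \<Rightarrow> 'a) \<Rightarrow> real" where
  "dist_approx_on V S = Inf ((\<lambda>F. opnorm_on V (\<lambda>x. S x - F x)) ` {F. approx_on V F})"

definition AX :: "('a::banach \<Rightarrow>\<^sub>L 'a) set" where
  "AX = closure {T. finite_rank_on UNIV (blinfun_apply T)}"

definition KX :: "('a::banach \<Rightarrow>\<^sub>L 'a) set" where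
  "KX = {T. compact_op_on UNIV (blinfun_apply T)}"

definition qnorm :: "('a::banach \<Rightarrow>\<^sub>L 'a) \<Rightarrow> real" where
  "qnorm T = infdist T AX"

definition psi_rep :: "(nat \<Rightarrow> ('a::banach \<Rightarrow>\<^sub>L 'a)) \<Rightarrow> (nat \<Rightarrow> real) \<Rightarrow> ('a \<Rightarrow>\<^sub>L 'a)" where
  "psi_rep U a = (\<Sum>k. a k *\<^sub>R U k)"

text \<open>Preimage in \<open>\<K>(X)\<close> under the quotient map of the closed subalgebra \<open>\<B>\<close>
  of \<open>\<K>(X)/\<A>(X)\<close> generated by \<open>\<psi>(c\<^sub>0)\<close>: the smallest set of
  representatives containing the \<open>\<psi>\<close>-representatives and \<open>\<A>(X)\<close> (the zero class),
  closed under the algebra operations and under limits in the quotient norm.\<close>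
inductive_set B_pre :: "(nat \<Rightarrow> ('a::banach \<Rightarrow>\<^sub>L 'a)) \<Rightarrow> ('a \<Rightarrow>\<^sub>L 'a) set"
  for U :: "nat \<Rightarrow> ('a::banach \<Rightarrow>\<^sub>L 'a)" where
  gen: "a \<longlonglongrightarrow> 0 \<Longrightarrow> psi_rep U a \<in> B_pre U"
| zero: "T \<in> AX \<Longrightarrow> T \<in> B_pre U"
| add: "T \<in> B_pre U \<Longrightarrow> S \<in> B_pre U \<Longrightarrow> T + S \<in> B_pre U"
| scale: "T \<in> B_pre U \<Longrightarrow> c *\<^sub>R T \<in> B_pre U"
| mult: "T \<in> B_pre U \<Longrightarrow> S \<in> B_pre U \<Longrightarrow> T o\<^sub>L S \<in> B_pre U"
| lim: "T \<in> KX \<Longrightarrow> (\<forall>e>0. \<exists>S. S \<in> B_pre U \<and> qnorm (T - S) < e) \<Longrightarrow> T \<in> B_pre U"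

end

theory Submission
  imports Defs
begin

(*
  Since P_k P_j = 0 for j \<noteq> k, also U_k U_j = 0, so psi(a) psi(b) = \<Sum>_k a_k b_k U_k^2 is
  symmetric in a and b: the generators of B commute exactly, not only modulo A(X).
  Because A(X) is a closed two-sided ideal, the operators whose commutator with a fixed X
  lies in A(X) form a set containing A(X) that is closed under the algebra operations and
  under approximation in the quotient norm; two inductions over the generation of B then
  give commutativity modulo A(X).  The decomposition estimates serve only to make
  \<Sum>_k a_k U_k converge, through the uniform bound
  norm (\<Sum>_{k<n} c_k U_k) \<le> M sup_k |c_k|.
*)

lemmas linear_blinfun_apply = bounded_linear.linear[OF blinfun.bounded_linear_right]

lemmas bounded_linear_blinfun_compose_left =
  bounded_bilinear.bounded_linear_left[OF bounded_bilinear_blinfun_compose]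

lemmas bounded_linear_blinfun_compose_right =
  bounded_bilinear.bounded_linear_right[OF bounded_bilinear_blinfun_compose]

definition finite_rank_blinfuns :: "('a::real_normed_vector \<Rightarrow>\<^sub>L 'a) set" where
  "finite_rank_blinfuns = {T. finite_rank_on UNIV (blinfun_apply T)}"

lemma bounded_op_on_UNIV_blinfun: "bounded_op_on UNIV (blinfun_apply T)"
  unfolding bounded_op_on_def
  by (auto simp: blinfun.add_right blinfun.scaleR_right intro: norm_blinfun)

lemma finite_rank_blinfuns_iff:
  "T \<in> finite_rank_blinfuns \<longleftrightarrow> (\<exists>B. finite B \<and> range (blinfun_apply T) \<subseteq> span B)"
  unfolding finite_rank_blinfuns_def finite_rank_on_def
  using bounded_op_on_UNIV_blinfun by auto

lemma subspace_finite_rank_blinfuns: "subspace finite_rank_blinfuns"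
  unfolding subspace_def
proof (intro conjI ballI allI)
  show "0 \<in> finite_rank_blinfuns"
    unfolding finite_rank_blinfuns_iff by (rule exI[of _ "{}"]) auto
next
  fix T S :: "'a \<Rightarrow>\<^sub>L 'a"
  assume "T \<in> finite_rank_blinfuns" "S \<in> finite_rank_blinfuns"
  then obtain B1 B2 where "finite B1" "range (blinfun_apply T) \<subseteq> span B1"
      "finite B2" "range (blinfun_apply S) \<subseteq> span B2"
    unfolding finite_rank_blinfuns_iff by blast
  moreover from this have "range (blinfun_apply (T + S)) \<subseteq> span (B1 \<union> B2)"
    using span_mono[of B1 "B1 \<union> B2"] span_mono[of B2 "B1 \<union> B2"]
    by (auto simp: blinfun.add_left intro!: span_add)
  ultimately show "T + S \<in> finite_rank_blinfuns"
    unfolding finite_rank_blinfuns_iff by blast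
next
  fix c :: real and T :: "'a \<Rightarrow>\<^sub>L 'a"
  assume "T \<in> finite_rank_blinfuns"
  then obtain B where "finite B" "range (blinfun_apply T) \<subseteq> span B"
    unfolding finite_rank_blinfuns_iff by blast
  moreover from this have "range (blinfun_apply (c *\<^sub>R T)) \<subseteq> span B"
    by (auto simp: span_scale blinfun.scaleR_left)
  ultimately show "c *\<^sub>R T \<in> finite_rank_blinfuns"
    unfolding finite_rank_blinfuns_iff by blast
qed

lemma finite_rank_blinfuns_compose_right:
  "T \<in> finite_rank_blinfuns \<Longrightarrow> T o\<^sub>L R \<in> finite_rank_blinfuns"
  unfolding finite_rank_blinfuns_iff by fastforce

lemma finite_rank_blinfuns_compose_left:
  assumes "T \<in> finite_rank_blinfuns"
  shows "R o\<^sub>L T \<in> finite_rank_blinfuns"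
proof -
  obtain B where B: "finite B" "range (blinfun_apply T) \<subseteq> span B"
    using assms unfolding finite_rank_blinfuns_iff by blast
  have "range (blinfun_apply (R o\<^sub>L T)) \<subseteq> span (blinfun_apply R ` B)"
    using B(2) by (auto simp: span_linear_image[OF linear_blinfun_apply])
  with B(1) show ?thesis
    unfolding finite_rank_blinfuns_iff by blast
qed

lemma subspace_closure:
  fixes S :: "'a::real_normed_vector set"
  assumes "subspace S"
  shows "subspace (closure S)"
  unfolding subspace_def
proof (intro conjI ballI allI)
  show "0 \<in> closure S"
    using assms closure_subset subspace_0 by blast
next
  fix x y assume "x \<in> closure S" "y \<in> closure S"
  then obtain f g where "\<And>n. f n \<in> S" "f \<longlonglongrightarrow> x" "\<And>n. g n \<in> S" "g \<longlonglongrightarrow> y"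
    unfolding closure_sequential by blast
  then show "x + y \<in> closure S"
    unfolding closure_sequential
    by (intro exI[of _ "\<lambda>n. f n + g n"]) (auto intro: tendsto_add subspace_add[OF assms])
next
  fix c x assume "x \<in> closure S"
  then obtain f where "\<And>n. f n \<in> S" "f \<longlonglongrightarrow> x"
    unfolding closure_sequential by blast
  then show "c *\<^sub>R x \<in> closure S"
    unfolding closure_sequential
    by (intro exI[of _ "\<lambda>n. c *\<^sub>R f n"]) (auto intro: tendsto_scaleR subspace_scale[OF assms])
qed

lemma closure_invariant_bounded_linear:
  assumes "bounded_linear f" "f ` S \<subseteq> S"
  shows "f ` closure S \<subseteq> closure S"
  by (meson assms closure_bounded_linear_image_subset closure_mono order_trans)

lemma AX_eq_closure: "AX = closure finite_rank_blinfuns"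
  unfolding AX_def finite_rank_blinfuns_def ..

lemma closed_AX: "closed AX"
  unfolding AX_eq_closure by simp

lemma subspace_AX: "subspace AX"
  unfolding AX_eq_closure by (intro subspace_closure subspace_finite_rank_blinfuns)

lemma AX_compose_left:
  assumes "T \<in> AX"
  shows "R o\<^sub>L T \<in> AX"
  using closure_invariant_bounded_linear[OF bounded_linear_blinfun_compose_right[of R]]
    finite_rank_blinfuns_compose_left assms
  unfolding AX_eq_closure by blast

lemma AX_compose_right:
  assumes "T \<in> AX"
  shows "T o\<^sub>L R \<in> AX"
  using closure_invariant_bounded_linear[OF bounded_linear_blinfun_compose_left[of R]]
    finite_rank_blinfuns_compose_right assms
  unfolding AX_eq_closure by blast

definition commutator :: "('a::real_normed_vector \<Rightarrow>\<^sub>L 'a) \<Rightarrow> ('a \<Rightarrow>\<^sub>L 'a) \<Rightarrow> ('a \<Rightarrow>\<^sub>L 'a)" where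
  "commutator X T = (X o\<^sub>L T) - (T o\<^sub>L X)"

lemmas blinfun_compose_linear_simps =
  bounded_bilinear.add_left[OF bounded_bilinear_blinfun_compose]
  bounded_bilinear.add_right[OF bounded_bilinear_blinfun_compose]
  bounded_bilinear.diff_left[OF bounded_bilinear_blinfun_compose]
  bounded_bilinear.diff_right[OF bounded_bilinear_blinfun_compose]
  bounded_bilinear.scaleR_left[OF bounded_bilinear_blinfun_compose]
  bounded_bilinear.scaleR_right[OF bounded_bilinear_blinfun_compose]

lemma blinfun_compose_assoc: "(A o\<^sub>L B) o\<^sub>L C = A o\<^sub>L (B o\<^sub>L C)"
  by (rule blinfun_eqI) simp

lemma bounded_linear_commutator: "bounded_linear (commutator X)"
  unfolding commutator_def
  by (intro bounded_linear_sub bounded_linear_blinfun_compose_left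
      bounded_linear_blinfun_compose_right)

lemmas linear_commutator = bounded_linear.linear[OF bounded_linear_commutator]

lemma commutator_swap: "commutator T X = - commutator X T"
  unfolding commutator_def by simp

lemma commutator_compose_right:
  "commutator X (T o\<^sub>L S) = (commutator X T o\<^sub>L S) + (T o\<^sub>L commutator X S)"
  unfolding commutator_def
  by (simp add: blinfun_compose_linear_simps blinfun_compose_assoc)

lemma commutator_AX: "T \<in> AX \<Longrightarrow> commutator X T \<in> AX"
  unfolding commutator_def
  by (intro subspace_diff[OF subspace_AX] AX_compose_left AX_compose_right)

lemma qnorm_lessE:
  fixes T :: "'a::banach \<Rightarrow>\<^sub>L 'a"
  assumes "qnorm T < e"
  obtains A where "A \<in> AX" "norm (T - A) < e"
proof -
  have "AX \<noteq> ({} :: ('a \<Rightarrow>\<^sub>L 'a) set)"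
    using subspace_0[OF subspace_AX] by blast
  moreover from this have "(INF A\<in>AX. dist T A) < e"
    using assms unfolding qnorm_def by (simp add: infdist_notempty)
  ultimately obtain A where "A \<in> AX" "dist T A < e"
    by (auto simp: cINF_less_iff intro: bdd_belowI2[of _ 0])
  then show ?thesis
    using that by (simp add: dist_norm)
qed

lemma commutator_AX_qnorm_limit:
  assumes "\<And>e. e > 0 \<Longrightarrow> \<exists>S. commutator X S \<in> AX \<and> qnorm (T - S) < e"
  shows "commutator X T \<in> AX"
proof -
  let ?W = "commutator X -` AX"
  have "closed ?W"
    using closed_AX linear_continuous_on[OF bounded_linear_commutator] by (rule closed_vimage)
  moreover have "T \<in> closure ?W"
    unfolding closure_approachable
  proof (intro allI impI)
    fix e :: real assume "e > 0"
    then obtain S where S: "commutator X S \<in> AX" "qnorm (T - S) < e"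
      using assms by blast
    then obtain A where A: "A \<in> AX" "norm (T - S - A) < e"
      by (auto elim: qnorm_lessE)
    have "commutator X (S + A) \<in> AX"
      using S(1) commutator_AX[OF A(1)]
      by (simp add: linear_add[OF linear_commutator]
          subspace_add[OF subspace_AX])
    moreover have "dist (S + A) T < e"
      using A(2) by (simp add: dist_norm norm_minus_commute diff_diff_eq)
    ultimately show "\<exists>W\<in>?W. dist W T < e"
      by blast
  qed
  ultimately show ?thesis
    using closure_closed by blast
qed

lemma commutator_AX_B_pre:
  assumes "\<And>a. a \<longlonglongrightarrow> 0 \<Longrightarrow> commutator X (psi_rep U a) \<in> AX"
    and "T \<in> B_pre U"
  shows "commutator X T \<in> AX"
  using \<open>T \<in> B_pre U\<close>
proof (induction T rule: B_pre.induct)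
  case (gen a)
  then show ?case by (rule assms(1))
next
  case (zero T)
  then show ?case by (rule commutator_AX)
next
  case (add T S)
  then show ?case
    by (simp add: linear_add[OF linear_commutator]
        subspace_add[OF subspace_AX])
next
  case (scale T c)
  then show ?case
    by (simp add: linear_scale[OF linear_commutator]
        subspace_scale[OF subspace_AX])
next
  case (mult T S)
  then show ?case
    unfolding commutator_compose_right
    by (intro subspace_add[OF subspace_AX] AX_compose_left AX_compose_right)
next
  case (lim T)
  then show ?case
    by (intro commutator_AX_qnorm_limit) blast
qed

lemma B_pre_commutative_mod_AX:
  assumes "\<And>a b. a \<longlonglongrightarrow> 0 \<Longrightarrow> b \<longlonglongrightarrow> 0 \<Longrightarrow> commutator (psi_rep U a) (psi_rep U b) \<in> AX"
    and "T \<in> B_pre U" "T' \<in> B_pre U"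
  shows "commutator T T' \<in> AX"
proof -
  have "commutator T (psi_rep U b) \<in> AX" if "b \<longlonglongrightarrow> 0" for b
    using commutator_AX_B_pre[of "psi_rep U b" U T] assms(1,2) that
    by (metis commutator_swap subspace_neg[OF subspace_AX])
  then show ?thesis
    using commutator_AX_B_pre assms(3) by blast
qed

lemma psi_rep_compose:
  fixes U :: "nat \<Rightarrow> ('a::banach \<Rightarrow>\<^sub>L 'a)"
  assumes summable_a: "summable (\<lambda>k. a k *\<^sub>R U k)"
    and summable_b: "summable (\<lambda>k. b k *\<^sub>R U k)"
    and orth: "\<And>j k. j \<noteq> k \<Longrightarrow> U k o\<^sub>L U j = 0"
  shows "psi_rep U a o\<^sub>L psi_rep U b = (\<Sum>k. (a k * b k) *\<^sub>R (U k o\<^sub>L U k))"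
proof -
  have U_compose_psi_rep: "U k o\<^sub>L psi_rep U b = b k *\<^sub>R (U k o\<^sub>L U k)" for k
  proof -
    have "U k o\<^sub>L psi_rep U b = (\<Sum>j. U k o\<^sub>L (b j *\<^sub>R U j))"
      unfolding psi_rep_def
      by (rule bounded_linear.suminf[OF bounded_linear_blinfun_compose_right summable_b])
    also have "\<dots> = (\<Sum>j. if j = k then b k *\<^sub>R (U k o\<^sub>L U k) else 0)"
      by (rule suminf_cong) (auto simp: blinfun_compose_linear_simps orth)
    also have "\<dots> = b k *\<^sub>R (U k o\<^sub>L U k)"
      by (rule sums_unique[OF sums_single, symmetric])
    finally show ?thesis .
  qed
  have "psi_rep U a o\<^sub>L psi_rep U b = (\<Sum>k. (a k *\<^sub>R U k) o\<^sub>L psi_rep U b)"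
    unfolding psi_rep_def[of U a]
    by (rule bounded_linear.suminf[OF bounded_linear_blinfun_compose_left summable_a])
  also have "\<dots> = (\<Sum>k. (a k * b k) *\<^sub>R (U k o\<^sub>L U k))"
    by (simp add: blinfun_compose_linear_simps U_compose_psi_rep)
  finally show ?thesis .
qed

lemma commutator_psi_rep_eq_0:
  fixes U :: "nat \<Rightarrow> ('a::banach \<Rightarrow>\<^sub>L 'a)"
  assumes "summable (\<lambda>k. a k *\<^sub>R U k)" "summable (\<lambda>k. b k *\<^sub>R U k)"
    and "\<And>j k. j \<noteq> k \<Longrightarrow> U k o\<^sub>L U j = 0"
  shows "commutator (psi_rep U a) (psi_rep U b) = 0"
  unfolding commutator_def
  using psi_rep_compose[of a U b] psi_rep_compose[of b U a] assms
  by (simp add: mult.commute)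

lemma summable_scaleR_of_bounded_partial_sums:
  fixes u :: "nat \<Rightarrow> 'b::banach"
  assumes bound: "\<And>c \<epsilon> n. (\<And>k. \<bar>c k\<bar> \<le> \<epsilon>) \<Longrightarrow> norm (\<Sum>k<n. c k *\<^sub>R u k) \<le> M * \<epsilon>"
    and a: "a \<longlonglongrightarrow> 0"
  shows "summable (\<lambda>k. a k *\<^sub>R u k)"
  unfolding summable_Cauchy
proof (intro allI impI)
  fix e :: real assume "e > 0"
  define \<epsilon> where "\<epsilon> = e / (\<bar>M\<bar> + 1)"
  have "\<epsilon> > 0" "\<bar>M\<bar> * \<epsilon> < e"
    using \<open>e > 0\<close> by (simp_all add: \<epsilon>_def field_simps)
  obtain N where N: "\<And>k. k \<ge> N \<Longrightarrow> \<bar>a k\<bar> < \<epsilon>"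
    using a \<open>\<epsilon> > 0\<close> unfolding LIMSEQ_def by (auto simp: dist_real_def)
  have "norm (\<Sum>k\<in>{m..<n}. a k *\<^sub>R u k) < e" if "m \<ge> N" for m n
  proof -
    define c where "c k = (if m \<le> k then a k else 0)" for k
    have "(\<Sum>k\<in>{m..<n}. a k *\<^sub>R u k) = (\<Sum>k<n. c k *\<^sub>R u k)"
      unfolding c_def by (rule sum.mono_neutral_cong_left) auto
    also have "norm \<dots> \<le> M * \<epsilon>"
      using N that by (intro bound) (auto simp: c_def less_imp_le \<open>\<epsilon> > 0\<close>)
    also have "\<dots> \<le> \<bar>M\<bar> * \<epsilon>"
      using \<open>\<epsilon> > 0\<close> by (intro mult_right_mono) auto
    finally show ?thesis
      using \<open>\<bar>M\<bar> * \<epsilon> < e\<close> by linarith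
  qed
  then show "\<exists>N. \<forall>m\<ge>N. \<forall>n. norm (\<Sum>k\<in>{m..<n}. a k *\<^sub>R u k) < e"
    by blast
qed

lemma bounded_op_on_zero:
  assumes "bounded_op_on V T" "0 \<in> V"
  shows "T 0 = 0"
  using assms unfolding bounded_op_on_def by (metis scaleR_zero_left)

lemma subspace_range_blinfun: "subspace (range (blinfun_apply T))"
  by (intro linear_subspace_image subspace_UNIV linear_blinfun_apply)

lemma norm_le_opnorm_on:
  assumes T: "bounded_op_on V T" and "subspace V" "y \<in> V"
  shows "norm (T y) \<le> opnorm_on V T * norm y"
proof (cases "y = 0")
  case True
  then show ?thesis
    using bounded_op_on_zero[OF T subspace_0[OF \<open>subspace V\<close>]] by simp
next
  case False
  obtain K where K: "\<And>x. x \<in> V \<Longrightarrow> norm (T x) \<le> K * norm x"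
    using T unfolding bounded_op_on_def by blast
  have "bdd_above ((\<lambda>x. norm (T x)) ` (V \<inter> cball 0 1))"
    by (rule bdd_aboveI2[of _ _ "\<bar>K\<bar>"])
      (auto intro!: order_trans[OF K] order_trans[OF mult_right_mono[OF abs_ge_self]]
        mult_left_le)
  moreover have "(1 / norm y) *\<^sub>R y \<in> V \<inter> cball 0 1"
    using False subspace_scale[OF \<open>subspace V\<close> \<open>y \<in> V\<close>] by auto
  ultimately have "norm (T ((1 / norm y) *\<^sub>R y)) \<le> opnorm_on V T"
    unfolding opnorm_on_def by (intro cSup_upper) auto
  moreover have "T ((1 / norm y) *\<^sub>R y) = (1 / norm y) *\<^sub>R T y"
    using T \<open>y \<in> V\<close> unfolding bounded_op_on_def by blast
  ultimately show ?thesis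
    using False by (simp add: divide_le_eq mult.commute)
qed

lemma blinfun_apply_Blinfun_compress:
  fixes P :: "'a::real_normed_vector \<Rightarrow>\<^sub>L 'a"
  assumes S: "bounded_op_on (range (blinfun_apply P)) S"
  shows "blinfun_apply (Blinfun (\<lambda>x. S (P x))) = (\<lambda>x. S (P x))"
proof -
  obtain K where K: "\<And>y. y \<in> range (blinfun_apply P) \<Longrightarrow> norm (S y) \<le> K * norm y"
    using S unfolding bounded_op_on_def by blast
  have "bounded_linear (\<lambda>x. S (P x))"
  proof (rule bounded_linear_intro[where K = "\<bar>K\<bar> * norm P"])
    show "S (P (x + y)) = S (P x) + S (P y)" for x y
      using S unfolding bounded_op_on_def by (simp add: blinfun.add_right)
    show "S (P (r *\<^sub>R x)) = r *\<^sub>R S (P x)" for r x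
      using S unfolding bounded_op_on_def by (simp add: blinfun.scaleR_right)
    show "norm (S (P x)) \<le> norm x * (\<bar>K\<bar> * norm P)" for x
    proof -
      have "norm (S (P x)) \<le> \<bar>K\<bar> * norm (P x)"
        using K[of "P x"] by (auto intro: order_trans[OF _ mult_right_mono[OF abs_ge_self]])
      also have "\<dots> \<le> \<bar>K\<bar> * (norm P * norm x)"
        by (intro mult_left_mono norm_blinfun) auto
      finally show ?thesis
        by (simp add: ac_simps)
    qed
  qed
  then show ?thesis
    by (rule bounded_linear_Blinfun_apply)
qed

lemma Blinfun_compress_compose_eq_0:
  fixes P Q :: "'a::real_normed_vector \<Rightarrow>\<^sub>L 'a"
  assumes "Q o\<^sub>L P = 0"
    and S: "bounded_op_on (range (blinfun_apply P)) S"
    and R: "bounded_op_on (range (blinfun_apply Q)) R"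
  shows "Blinfun (\<lambda>x. R (Q x)) o\<^sub>L Blinfun (\<lambda>x. S (P x)) = 0"
proof (rule blinfun_eqI)
  fix x
  obtain z where "S (P x) = P z"
    using S unfolding bounded_op_on_def by blast
  moreover have "Q (P z) = 0"
    using \<open>Q o\<^sub>L P = 0\<close> by (metis blinfun_apply_blinfun_compose zero_blinfun.rep_eq)
  moreover have "R 0 = 0"
    using R subspace_0[OF subspace_range_blinfun] by (rule bounded_op_on_zero)
  ultimately show "(Blinfun (\<lambda>x. R (Q x)) o\<^sub>L Blinfun (\<lambda>x. S (P x))) x = blinfun_apply 0 x"
    by (simp add: blinfun_apply_Blinfun_compress[OF S] blinfun_apply_Blinfun_compress[OF R])
qed

lemma sum_powr_root_le_scaled:
  fixes f g :: "nat \<Rightarrow> real"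
  assumes "p > 0" "0 \<le> t"
    and "\<And>k. 0 \<le> f k" "\<And>k. 0 \<le> g k" "\<And>k. f k \<le> t * g k"
    and summable: "summable (\<lambda>k. g k powr p)"
  shows "(\<Sum>k<n. f k powr p) powr (1 / p) \<le> t * (\<Sum>k. g k powr p) powr (1 / p)"
proof -
  have "(\<Sum>k<n. f k powr p) \<le> (\<Sum>k<n. t powr p * g k powr p)"
    using assms by (intro sum_mono) (simp add: powr_mono2 flip: powr_mult)
  also have "\<dots> \<le> t powr p * (\<Sum>k. g k powr p)"
    unfolding sum_distrib_left[symmetric]
    using summable by (intro mult_left_mono sum_le_suminf) auto
  finally have "(\<Sum>k<n. f k powr p) powr (1 / p) \<le> (t powr p * (\<Sum>k. g k powr p)) powr (1 / p)"
    using \<open>p > 0\<close> by (intro powr_mono2) (auto intro: sum_nonneg)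
  also have "\<dots> = t * (\<Sum>k. g k powr p) powr (1 / p)"
    using assms by (simp add: powr_mult powr_powr suminf_nonneg)
  finally show ?thesis .
qed

lemma norm_sum_le_of_lp_decomposition:
  fixes P U :: "nat \<Rightarrow> ('a::real_normed_vector \<Rightarrow>\<^sub>L 'a)"
  assumes "p \<ge> 1"
    and upper: "\<And>y N. (\<And>n. y n \<in> range (blinfun_apply (P n))) \<Longrightarrow>
      norm (\<Sum>n<N. y n) \<le> C * (\<Sum>n<N. norm (y n) powr p) powr (1 / p)"
    and lower_summable: "\<And>x. summable (\<lambda>n. norm (P n x) powr p)"
    and lower: "\<And>x. (\<Sum>n. norm (P n x) powr p) powr (1 / p) \<le> D * norm x"
    and U_range: "\<And>k x. U k x \<in> range (blinfun_apply (P k))"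
    and U_bound: "\<And>k x. norm (U k x) \<le> K * norm (P k x)" and "0 \<le> K"
    and c: "\<And>k. \<bar>c k\<bar> \<le> \<epsilon>"
  shows "norm (\<Sum>k<n. c k *\<^sub>R U k) \<le> \<bar>C\<bar> * K * \<bar>D\<bar> * \<epsilon>"
proof (rule norm_blinfun_bound)
  have "0 \<le> \<epsilon>"
    using c[of 0] by linarith
  then show "0 \<le> \<bar>C\<bar> * K * \<bar>D\<bar> * \<epsilon>"
    using \<open>0 \<le> K\<close> by simp
  fix x
  define y where "y k = c k *\<^sub>R U k x" for k
  have y_bound: "norm (y k) \<le> (\<epsilon> * K) * norm (P k x)" for k
    unfolding y_def using c[of k] U_bound[of k x] \<open>0 \<le> K\<close>
    by (auto simp: mult.assoc intro!: mult_mono)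
  have "(\<Sum>k<n. norm (y k) powr p) powr (1 / p) \<le> (\<epsilon> * K) * (\<Sum>k. norm (P k x) powr p) powr (1 / p)"
    using \<open>p \<ge> 1\<close> \<open>0 \<le> \<epsilon>\<close> \<open>0 \<le> K\<close> y_bound lower_summable
    by (intro sum_powr_root_le_scaled) auto
  also have "\<dots> \<le> (\<epsilon> * K) * (\<bar>D\<bar> * norm x)"
    using lower[of x] \<open>0 \<le> \<epsilon>\<close> \<open>0 \<le> K\<close>
    by (intro mult_left_mono) (auto intro: order_trans[OF _ mult_right_mono[OF abs_ge_self]])
  finally have y_lp: "(\<Sum>k<n. norm (y k) powr p) powr (1 / p) \<le> \<epsilon> * K * (\<bar>D\<bar> * norm x)" .
  have "norm ((\<Sum>k<n. c k *\<^sub>R U k) x) = norm (\<Sum>k<n. y k)"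
    by (simp add: y_def blinfun.sum_left blinfun.scaleR_left)
  also have "\<dots> \<le> C * (\<Sum>k<n. norm (y k) powr p) powr (1 / p)"
    by (rule upper) (simp add: y_def subspace_scale[OF subspace_range_blinfun] U_range)
  also have "\<dots> \<le> \<bar>C\<bar> * (\<Sum>k<n. norm (y k) powr p) powr (1 / p)"
    by (intro mult_right_mono) auto
  also have "\<dots> \<le> \<bar>C\<bar> * (\<epsilon> * K * (\<bar>D\<bar> * norm x))"
    using y_lp by (intro mult_left_mono) auto
  finally show "norm ((\<Sum>k<n. c k *\<^sub>R U k) x) \<le> \<bar>C\<bar> * K * \<bar>D\<bar> * \<epsilon> * norm x"
    by (simp add: ac_simps)
qed

lemma norm_sum_le_of_c0_decomposition:
  fixes P U :: "nat \<Rightarrow> ('a::real_normed_vector \<Rightarrow>\<^sub>L 'a)"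
  assumes upper: "\<And>y N. (\<And>n. y n \<in> range (blinfun_apply (P n))) \<Longrightarrow>
      norm (\<Sum>n<N. y n) \<le> C * Max (insert 0 ((\<lambda>n. norm (y n)) ` {..<N}))"
    and lower: "\<And>n x. norm (P n x) \<le> D * norm x"
    and U_range: "\<And>k x. U k x \<in> range (blinfun_apply (P k))"
    and U_bound: "\<And>k x. norm (U k x) \<le> K * norm (P k x)" and "0 \<le> K"
    and c: "\<And>k. \<bar>c k\<bar> \<le> \<epsilon>"
  shows "norm (\<Sum>k<n. c k *\<^sub>R U k) \<le> \<bar>C\<bar> * K * \<bar>D\<bar> * \<epsilon>"
proof (rule norm_blinfun_bound)
  have "0 \<le> \<epsilon>"
    using c[of 0] by linarith
  then show "0 \<le> \<bar>C\<bar> * K * \<bar>D\<bar> * \<epsilon>"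
    using \<open>0 \<le> K\<close> by simp
  fix x
  define y where "y k = c k *\<^sub>R U k x" for k
  have "norm (y k) \<le> \<epsilon> * K * (\<bar>D\<bar> * norm x)" for k
  proof -
    have "norm (y k) \<le> \<epsilon> * (K * norm (P k x))"
      unfolding y_def using c[of k] U_bound[of k x] by (auto intro!: mult_mono)
    also have "\<dots> \<le> \<epsilon> * (K * (\<bar>D\<bar> * norm x))"
      using lower[of k x] \<open>0 \<le> \<epsilon>\<close> \<open>0 \<le> K\<close>
      by (intro mult_left_mono) (auto intro: order_trans[OF _ mult_right_mono[OF abs_ge_self]])
    finally show ?thesis
      by (simp add: ac_simps)
  qed
  then have y_sup: "Max (insert 0 ((\<lambda>k. norm (y k)) ` {..<n})) \<le> \<epsilon> * K * (\<bar>D\<bar> * norm x)"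
    using \<open>0 \<le> \<epsilon>\<close> \<open>0 \<le> K\<close> by auto
  have "norm ((\<Sum>k<n. c k *\<^sub>R U k) x) = norm (\<Sum>k<n. y k)"
    by (simp add: y_def blinfun.sum_left blinfun.scaleR_left)
  also have "\<dots> \<le> C * Max (insert 0 ((\<lambda>k. norm (y k)) ` {..<n}))"
    by (rule upper) (simp add: y_def subspace_scale[OF subspace_range_blinfun] U_range)
  also have "\<dots> \<le> \<bar>C\<bar> * Max (insert 0 ((\<lambda>k. norm (y k)) ` {..<n}))"
    by (intro mult_right_mono) (auto intro: Max_ge)
  also have "\<dots> \<le> \<bar>C\<bar> * (\<epsilon> * K * (\<bar>D\<bar> * norm x))"
    using y_sup by (intro mult_left_mono) auto
  finally show "norm ((\<Sum>k<n. c k *\<^sub>R U k) x) \<le> \<bar>C\<bar> * K * \<bar>D\<bar> * \<epsilon> * norm x"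
    by (simp add: ac_simps)
qed

lemma partial_sums_bound_of_decomposition:
  fixes P U :: "nat \<Rightarrow> ('a::real_normed_vector \<Rightarrow>\<^sub>L 'a)"
  assumes decomp:
      "(\<exists>p::real. p \<ge> 1 \<and> (\<exists>C D.
          (\<forall>x N. (\<forall>n. x n \<in> range (blinfun_apply (P n))) \<longrightarrow>
              norm (\<Sum>n<N. x n) \<le> C * (\<Sum>n<N. norm (x n) powr p) powr (1 / p)) \<and>
          (\<forall>x. summable (\<lambda>n. norm (P n x) powr p) \<and>
              (\<Sum>n. norm (P n x) powr p) powr (1 / p) \<le> D * norm x)))
       \<or> (\<exists>C D.
          (\<forall>x N. (\<forall>n. x n \<in> range (blinfun_apply (P n))) \<longrightarrow>
              norm (\<Sum>n<N. x n) \<le> C * Max (insert 0 ((\<lambda>n. norm (x n)) ` {..<N}))) \<and>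
          (\<forall>x. (\<lambda>n. P n x) \<longlonglongrightarrow> 0 \<and> (\<forall>n. norm (P n x) \<le> D * norm x)))"
    and U_range: "\<And>k x. U k x \<in> range (blinfun_apply (P k))"
    and U_bound: "\<And>k x. norm (U k x) \<le> K * norm (P k x)" and "0 \<le> K"
  obtains M where "\<And>c \<epsilon> n. (\<And>k. \<bar>c k\<bar> \<le> \<epsilon>) \<Longrightarrow> norm (\<Sum>k<n. c k *\<^sub>R U k) \<le> M * \<epsilon>"
  using decomp
proof (elim disjE exE conjE)
  fix p C D
  assume "p \<ge> 1" and upper: "\<forall>x N. (\<forall>n. x n \<in> range (blinfun_apply (P n))) \<longrightarrow>
      norm (\<Sum>n<N. x n) \<le> C * (\<Sum>n<N. norm (x n) powr p) powr (1 / p)"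
    and lower: "\<forall>x. summable (\<lambda>n. norm (P n x) powr p) \<and>
      (\<Sum>n. norm (P n x) powr p) powr (1 / p) \<le> D * norm x"
  show thesis
  proof (rule that)
    show "norm (\<Sum>k<n. c k *\<^sub>R U k) \<le> \<bar>C\<bar> * K * \<bar>D\<bar> * \<epsilon>"
      if "\<And>k. \<bar>c k\<bar> \<le> \<epsilon>" for c \<epsilon> n
      by (rule norm_sum_le_of_lp_decomposition[where P = P and U = U];
          use \<open>p \<ge> 1\<close> upper lower U_range U_bound \<open>0 \<le> K\<close> that in auto)
  qed
next
  fix C D
  assume upper: "\<forall>x N. (\<forall>n. x n \<in> range (blinfun_apply (P n))) \<longrightarrow>
      norm (\<Sum>n<N. x n) \<le> C * Max (insert 0 ((\<lambda>n. norm (x n)) ` {..<N}))"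
    and lower: "\<forall>x. (\<lambda>n. P n x) \<longlonglongrightarrow> 0 \<and> (\<forall>n. norm (P n x) \<le> D * norm x)"
  show thesis
  proof (rule that)
    show "norm (\<Sum>k<n. c k *\<^sub>R U k) \<le> \<bar>C\<bar> * K * \<bar>D\<bar> * \<epsilon>"
      if "\<And>k. \<bar>c k\<bar> \<le> \<epsilon>" for c \<epsilon> n
      by (rule norm_sum_le_of_c0_decomposition[where P = P and U = U];
          use upper lower U_range U_bound \<open>0 \<le> K\<close> that in auto)
  qed
qed

theorem proposition2p7:
  fixes P :: "nat \<Rightarrow> ('a::banach \<Rightarrow>\<^sub>L 'a)"
    and S :: "nat \<Rightarrow> 'a \<Rightarrow> 'a"
    and U :: "nat \<Rightarrow> ('a \<Rightarrow>\<^sub>L 'a)"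
  assumes proj: "\<And>n. P n o\<^sub>L P n = P n"
    and orth: "\<And>n m. n \<noteq> m \<Longrightarrow> P n o\<^sub>L P m = 0"
    and unif: "\<exists>M. \<forall>n. norm (P n) \<le> M"
    and decomp:
      "(\<exists>p::real. p \<ge> 1 \<and> (\<exists>C D.
          (\<forall>x N. (\<forall>n. x n \<in> range (blinfun_apply (P n))) \<longrightarrow>
              norm (\<Sum>n<N. x n) \<le> C * (\<Sum>n<N. norm (x n) powr p) powr (1 / p)) \<and>
          (\<forall>x. summable (\<lambda>n. norm (P n x) powr p) \<and>
              (\<Sum>n. norm (P n x) powr p) powr (1 / p) \<le> D * norm x)))
       \<or> (\<exists>C D.
          (\<forall>x N. (\<forall>n. x n \<in> range (blinfun_apply (P n))) \<longrightarrow>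
              norm (\<Sum>n<N. x n) \<le> C * Max (insert 0 ((\<lambda>n. norm (x n)) ` {..<N}))) \<and>
          (\<forall>x. (\<lambda>n. P n x) \<longlonglongrightarrow> 0 \<and> (\<forall>n. norm (P n x) \<le> D * norm x)))"
    and S_cpt: "\<And>n. compact_op_on (range (blinfun_apply (P n))) (S n)"
    and S_dist: "\<And>n. dist_approx_on (range (blinfun_apply (P n))) (S n) = 1"
    and S_norm: "\<And>n. opnorm_on (range (blinfun_apply (P n))) (S n) \<le> 2"
    and U_def: "\<And>n. U n = Blinfun (\<lambda>x. S n (P n x))"
  shows "\<forall>T\<in>B_pre U. \<forall>T'\<in>B_pre U. (T o\<^sub>L T') - (T' o\<^sub>L T) \<in> AX"
proof -
  have S_op: "bounded_op_on (range (blinfun_apply (P n))) (S n)" for n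
    using S_cpt unfolding compact_op_on_def by blast
  have U_apply: "U n x = S n (P n x)" for n x
    by (simp add: U_def blinfun_apply_Blinfun_compress[OF S_op])
  have U_range: "U n x \<in> range (blinfun_apply (P n))" for n x
    using S_op unfolding bounded_op_on_def by (simp add: U_apply)
  have U_bound: "norm (U n x) \<le> 2 * norm (P n x)" for n x
    using norm_le_opnorm_on[OF S_op subspace_range_blinfun rangeI] S_norm
    by (metis U_apply mult_right_mono norm_ge_zero order_trans)
  have U_orth: "U k o\<^sub>L U j = 0" if "j \<noteq> k" for j k
    unfolding U_def using orth that S_op by (intro Blinfun_compress_compose_eq_0) auto
  obtain M where "\<And>c \<epsilon> n. (\<And>k. \<bar>c k\<bar> \<le> \<epsilon>) \<Longrightarrow> norm (\<Sum>k<n. c k *\<^sub>R U k) \<le> M * \<epsilon>"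
    using partial_sums_bound_of_decomposition[OF decomp U_range U_bound] by auto
  then have "summable (\<lambda>k. a k *\<^sub>R U k)" if "a \<longlonglongrightarrow> 0" for a
    using summable_scaleR_of_bounded_partial_sums that by blast
  then have "commutator (psi_rep U a) (psi_rep U b) \<in> AX" if "a \<longlonglongrightarrow> 0" "b \<longlonglongrightarrow> 0" for a b
    using commutator_psi_rep_eq_0[OF _ _ U_orth] subspace_0[OF subspace_AX] that by simp
  then show ?thesis
    using B_pre_commutative_mod_AX unfolding commutator_def by blast
qed

end
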